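(* Let $p\in\Delta_7$ be strictly positive and suppose that one of the six slice determinants $d_{i,j}(p)$ ($i\in\{1,2,3\}$, $j\in\{0,1\}$) vanishes. Then $p\in\operatorname{RBM}_{3,2}$ and $p\in\mathcal{M}_{3,3}$.
   Context: A distribution of three binary random variables is a $2\times2\times2$ tensor $p=(p_{ijk})_{i,j,k\in\{0,1\}}$ with nonnegative entries summing to $1$; the set of these is $\Delta_7$. For $a,b,c\in\mathbb{R}^2_{\ge0}$, $a\otimes b\otimes c$ is the tensor with entries $a_ib_jc_k$. $\mathcal{M}_{3,3}$ is the set of $p\in\Delta_7$ that are a sum of three tensors of the form $a\otimes b\otimes c$ with $a,b,c\in\mathbb{R}^2_{\ge0}$. $\operatorname{RBM}_{3,2}$ is the set of $p\in\Delta_7$ of the form $p=(a_1\otimes b_1\otimes c_1+d_1\otimes e_1\otimes f_1)*(a_2\otimes b_2\otimes c_2+d_2\otimes e_2\otimes f_2)$ with all vectors in $\mathbb{R}^2_{\ge0}$, where $*$ is the entrywise product. The slice determinants are $d_{1,0}=p_{000}p_{011}-p_{001}p_{010}$, $d_{1,1}=p_{100}p_{111}-p_{101}p_{110}$, $d_{2,0}=p_{000}p_{101}-p_{001}p_{100}$, $d_{2,1}=p_{010}p_{111}-p_{011}p_{110}$, $d_{3,0}=p_{000}p_{110}-p_{010}p_{100}$, $d_{3,1}=p_{001}p_{111}-p_{011}p_{101}$. *)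

theory Defs
  imports "HOL-Analysis.Analysis"
begin

text \<open>A 2x2x2 tensor is represented as a function nat => nat => nat => real;
  only the entries with indices in {0,1} are meaningful. Vectors in R^2 are
  functions nat => real, only entries 0 and 1 meaningful.\<close>

type_synonym tensor3 = "nat \<Rightarrow> nat \<Rightarrow> nat \<Rightarrow> real"
type_synonym vec2 = "nat \<Rightarrow> real"

definition idx2 :: "nat set" where "idx2 = {0, 1}"

definition simplex7 :: "tensor3 set" where
  "simplex7 = {p. (\<forall>i\<in>idx2. \<forall>j\<in>idx2. \<forall>k\<in>idx2. p i j k \<ge> 0) \<and>
                  (\<Sum>i\<in>idx2. \<Sum>j\<in>idx2. \<Sum>k\<in>idx2. p i j k) = 1}"

definition nonneg2 :: "vec2 \<Rightarrow> bool" where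
  "nonneg2 a \<longleftrightarrow> a 0 \<ge> 0 \<and> a 1 \<ge> 0"

definition outer3 :: "vec2 \<Rightarrow> vec2 \<Rightarrow> vec2 \<Rightarrow> tensor3" where
  "outer3 a b c = (\<lambda>i j k. a i * b j * c k)"

definition tensor_eq :: "tensor3 \<Rightarrow> tensor3 \<Rightarrow> bool" where
  "tensor_eq p q \<longleftrightarrow> (\<forall>i\<in>idx2. \<forall>j\<in>idx2. \<forall>k\<in>idx2. p i j k = q i j k)"

definition M33 :: "tensor3 set" where
  "M33 = {p \<in> simplex7. \<exists>a b c :: nat \<Rightarrow> vec2.
      (\<forall>r<3. nonneg2 (a r) \<and> nonneg2 (b r) \<and> nonneg2 (c r)) \<and>
      tensor_eq p (\<lambda>i j k. \<Sum>r<3. outer3 (a r) (b r) (c r) i j k)}"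

definition RBM32 :: "tensor3 set" where
  "RBM32 = {p \<in> simplex7. \<exists>a1 b1 c1 d1 e1 f1 a2 b2 c2 d2 e2 f2 :: vec2.
      nonneg2 a1 \<and> nonneg2 b1 \<and> nonneg2 c1 \<and> nonneg2 d1 \<and> nonneg2 e1 \<and> nonneg2 f1 \<and>
      nonneg2 a2 \<and> nonneg2 b2 \<and> nonneg2 c2 \<and> nonneg2 d2 \<and> nonneg2 e2 \<and> nonneg2 f2 \<and>
      tensor_eq p (\<lambda>i j k. (outer3 a1 b1 c1 i j k + outer3 d1 e1 f1 i j k) *
                           (outer3 a2 b2 c2 i j k + outer3 d2 e2 f2 i j k))}"

definition slice_det :: "tensor3 \<Rightarrow> nat \<Rightarrow> nat \<Rightarrow> real" where
  "slice_det p i j =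
    (if i = 1 then p j 0 0 * p j 1 1 - p j 0 1 * p j 1 0
     else if i = 2 then p 0 j 0 * p 1 j 1 - p 0 j 1 * p 1 j 0
     else p 0 0 j * p 1 1 j - p 0 1 j * p 1 0 j)"

lemma slice_det_check:
  "slice_det p 1 0 = p 0 0 0 * p 0 1 1 - p 0 0 1 * p 0 1 0"
  "slice_det p 1 1 = p 1 0 0 * p 1 1 1 - p 1 0 1 * p 1 1 0"
  "slice_det p 2 0 = p 0 0 0 * p 1 0 1 - p 0 0 1 * p 1 0 0"
  "slice_det p 2 1 = p 0 1 0 * p 1 1 1 - p 0 1 1 * p 1 1 0"
  "slice_det p 3 0 = p 0 0 0 * p 1 1 0 - p 0 1 0 * p 1 0 0"
  "slice_det p 3 1 = p 0 0 1 * p 1 1 1 - p 0 1 1 * p 1 0 1"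
  by (simp_all add: slice_det_def)

end

theory Submission
  imports Defs
begin

text \<open>A vanishing slice determinant means that one 2x2 slice of \<open>p\<close> has rank one.
  Permuting the three variables and relabelling the two states of one of them carries every
  slice to the slice \<open>p\<^sub>0\<^sub>*\<^sub>*\<close>, and both models are invariant under these
  symmetries, so it suffices to treat \<open>d\<^sub>1\<^sub>,\<^sub>0 = 0\<close>. Then
  \<open>p = e\<^sub>0 \<otimes> u \<otimes> v + e\<^sub>1 \<otimes> M\<close> with \<open>M\<close> the positive slice \<open>p\<^sub>1\<^sub>*\<^sub>*\<close>,
  and splitting \<open>M\<close> into its two rows gives three nonnegative rank-one terms. For the RBM,
  pick \<open>0 < L \<le> min (p\<^sub>1\<^sub>0\<^sub>0 / p\<^sub>1\<^sub>1\<^sub>0) (p\<^sub>1\<^sub>0\<^sub>1 / p\<^sub>1\<^sub>1\<^sub>1)\<close>: on slice 1 the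
  row \<open>(L, 1) \<otimes> (p\<^sub>1\<^sub>1\<^sub>0, p\<^sub>1\<^sub>1\<^sub>1)\<close> lies entrywise below \<open>M\<close> with equality in row 1,
  so \<open>M\<close> is its entrywise product with \<open>1 + e\<^sub>0 \<otimes> h\<close> for some \<open>h \<ge> 0\<close>; on slice 0
  the first factor is 1 and the second is \<open>u \<otimes> v\<close>.\<close>

abbreviation index_cube :: "(nat \<times> nat \<times> nat) set" where
  "index_cube \<equiv> idx2 \<times> idx2 \<times> idx2"

lemma tensor_eq_iff:
  "tensor_eq p q \<longleftrightarrow>
     p 0 0 0 = q 0 0 0 \<and> p 0 0 1 = q 0 0 1 \<and> p 0 1 0 = q 0 1 0 \<and> p 0 1 1 = q 0 1 1 \<and>
     p 1 0 0 = q 1 0 0 \<and> p 1 0 1 = q 1 0 1 \<and> p 1 1 0 = q 1 1 0 \<and> p 1 1 1 = q 1 1 1"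
  by (simp add: tensor_eq_def idx2_def)

lemma tensor_eq_refl: "tensor_eq p p"
  by (simp add: tensor_eq_def)

lemma tensor_eq_trans: "tensor_eq p q \<Longrightarrow> tensor_eq q r \<Longrightarrow> tensor_eq p r"
  by (simp add: tensor_eq_def)

definition nonneg_rank_le :: "nat \<Rightarrow> tensor3 \<Rightarrow> bool" where
  "nonneg_rank_le n q \<longleftrightarrow> (\<exists>a b c :: nat \<Rightarrow> vec2.
      (\<forall>r<n. nonneg2 (a r) \<and> nonneg2 (b r) \<and> nonneg2 (c r)) \<and>
      tensor_eq q (\<lambda>i j k. \<Sum>r<n. outer3 (a r) (b r) (c r) i j k))"

lemma nonneg_rank_le_cong: "tensor_eq q q' \<Longrightarrow> nonneg_rank_le n q' \<Longrightarrow> nonneg_rank_le n q"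
  unfolding nonneg_rank_le_def by (meson tensor_eq_trans)

lemma nonneg_rank_le_outer3:
  "nonneg2 a \<Longrightarrow> nonneg2 b \<Longrightarrow> nonneg2 c \<Longrightarrow> nonneg_rank_le 1 (outer3 a b c)"
  unfolding nonneg_rank_le_def
  by (rule exI[of _ "\<lambda>_. a"], rule exI[of _ "\<lambda>_. b"], rule exI[of _ "\<lambda>_. c"])
     (simp add: tensor_eq_refl)

lemma sum_lessThan_add_split:
  fixes n :: nat
  shows "(\<Sum>r<m + n. f r) = (\<Sum>r<m. f r) + (\<Sum>r<n. f (m + r))"
  by (induction n) (simp_all add: add.assoc)

lemma nonneg_rank_le_add:
  assumes "nonneg_rank_le m s" and "nonneg_rank_le n t"
  shows "nonneg_rank_le (m + n) (\<lambda>i j k. s i j k + t i j k)"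
proof -
  obtain a b c where abc: "\<forall>r<m. nonneg2 (a r) \<and> nonneg2 (b r) \<and> nonneg2 (c r)"
    and s: "tensor_eq s (\<lambda>i j k. \<Sum>r<m. outer3 (a r) (b r) (c r) i j k)"
    using assms(1) unfolding nonneg_rank_le_def by blast
  obtain a' b' c' where abc': "\<forall>r<n. nonneg2 (a' r) \<and> nonneg2 (b' r) \<and> nonneg2 (c' r)"
    and t: "tensor_eq t (\<lambda>i j k. \<Sum>r<n. outer3 (a' r) (b' r) (c' r) i j k)"
    using assms(2) unfolding nonneg_rank_le_def by blast
  define join :: "(nat \<Rightarrow> vec2) \<Rightarrow> (nat \<Rightarrow> vec2) \<Rightarrow> nat \<Rightarrow> vec2"
    where "join u v r = (if r < m then u r else v (r - m))" for u v r
  have "\<forall>r<m + n. nonneg2 (join a a' r) \<and> nonneg2 (join b b' r) \<and> nonneg2 (join c c' r)"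
    using abc abc' by (auto simp: join_def)
  moreover have "tensor_eq (\<lambda>i j k. s i j k + t i j k)
      (\<lambda>i j k. \<Sum>r<m + n. outer3 (join a a' r) (join b b' r) (join c c' r) i j k)"
    using s t by (simp add: tensor_eq_def sum_lessThan_add_split join_def)
  ultimately show ?thesis
    unfolding nonneg_rank_le_def by blast
qed

lemma tensor_eq_sum:
  assumes "\<forall>r<n. tensor_eq (f r) (g r)"
  shows "tensor_eq (\<lambda>i j k. \<Sum>r<n. f r i j k) (\<lambda>i j k. \<Sum>r<n. g r i j k)"
  using assms by (simp add: tensor_eq_def)

definition reindex :: "(nat \<times> nat \<times> nat \<Rightarrow> nat \<times> nat \<times> nat) \<Rightarrow> tensor3 \<Rightarrow> tensor3" where
  "reindex \<sigma> q = (\<lambda>i j k. case \<sigma> (i, j, k) of (i', j', k') \<Rightarrow> q i' j' k')"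

definition axis_symmetry :: "(nat \<times> nat \<times> nat \<Rightarrow> nat \<times> nat \<times> nat) \<Rightarrow> bool" where
  "axis_symmetry \<sigma> \<longleftrightarrow> \<sigma> ` index_cube \<subseteq> index_cube \<and>
     (\<forall>a b c. nonneg2 a \<and> nonneg2 b \<and> nonneg2 c \<longrightarrow>
        (\<exists>a' b' c'. nonneg2 a' \<and> nonneg2 b' \<and> nonneg2 c' \<and>
           tensor_eq (reindex \<sigma> (outer3 a b c)) (outer3 a' b' c')))"

lemma reindex_comp: "reindex (\<tau> \<circ> \<sigma>) q = reindex \<sigma> (reindex \<tau> q)"
  by (simp add: reindex_def fun_eq_iff split: prod.split)

lemma tensor_eq_reindex:
  assumes "\<sigma> ` index_cube \<subseteq> index_cube" and "tensor_eq q q'"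
  shows "tensor_eq (reindex \<sigma> q) (reindex \<sigma> q')"
  unfolding tensor_eq_def
proof (intro ballI)
  fix i j k assume "i \<in> idx2" "j \<in> idx2" "k \<in> idx2"
  then have "\<sigma> (i, j, k) \<in> index_cube"
    using assms(1) by blast
  then show "reindex \<sigma> q i j k = reindex \<sigma> q' i j k"
    using assms(2) by (auto simp: tensor_eq_def reindex_def split: prod.split)
qed

lemma axis_symmetry_cube:
  "axis_symmetry \<sigma> \<Longrightarrow> \<sigma> ` index_cube \<subseteq> index_cube"
  unfolding axis_symmetry_def by blast

lemma axis_symmetry_outer3:
  assumes "axis_symmetry \<sigma>" and "nonneg2 a" "nonneg2 b" "nonneg2 c"
  shows "\<exists>a' b' c'. nonneg2 a' \<and> nonneg2 b' \<and> nonneg2 c' \<and>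
           tensor_eq (reindex \<sigma> (outer3 a b c)) (outer3 a' b' c')"
  using assms unfolding axis_symmetry_def by blast

lemma axis_symmetry_id: "axis_symmetry id"
  unfolding axis_symmetry_def reindex_def by (auto intro: tensor_eq_refl)

lemma axis_symmetry_comp:
  assumes "axis_symmetry \<sigma>" and "axis_symmetry \<tau>"
  shows "axis_symmetry (\<tau> \<circ> \<sigma>)"
  unfolding axis_symmetry_def
proof (intro conjI allI impI)
  note cube = axis_symmetry_cube[OF assms(1)] axis_symmetry_cube[OF assms(2)]
  then show "(\<tau> \<circ> \<sigma>) ` index_cube \<subseteq> index_cube"
    unfolding image_comp[symmetric] by (meson image_mono order_trans)
  fix a b c assume "nonneg2 a \<and> nonneg2 b \<and> nonneg2 c"
  then obtain a' b' c' where "nonneg2 a'" "nonneg2 b'" "nonneg2 c'"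
    and \<tau>: "tensor_eq (reindex \<tau> (outer3 a b c)) (outer3 a' b' c')"
    using axis_symmetry_outer3[OF assms(2)] by blast
  then obtain a'' b'' c'' where "nonneg2 a'' \<and> nonneg2 b'' \<and> nonneg2 c''"
    and \<sigma>: "tensor_eq (reindex \<sigma> (outer3 a' b' c')) (outer3 a'' b'' c'')"
    using axis_symmetry_outer3[OF assms(1)] by blast
  moreover have "tensor_eq (reindex (\<tau> \<circ> \<sigma>) (outer3 a b c)) (outer3 a'' b'' c'')"
    unfolding reindex_comp using tensor_eq_trans[OF tensor_eq_reindex[OF cube(1) \<tau>] \<sigma>] .
  ultimately show "\<exists>a' b' c'. nonneg2 a' \<and> nonneg2 b' \<and> nonneg2 c' \<and>
      tensor_eq (reindex (\<tau> \<circ> \<sigma>) (outer3 a b c)) (outer3 a' b' c')"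
    by blast
qed

definition flip1 :: "nat \<times> nat \<times> nat \<Rightarrow> nat \<times> nat \<times> nat" where
  "flip1 = (\<lambda>(i, j, k). (1 - i, j, k))"

definition swap12 :: "nat \<times> nat \<times> nat \<Rightarrow> nat \<times> nat \<times> nat" where
  "swap12 = (\<lambda>(i, j, k). (j, i, k))"

definition swap13 :: "nat \<times> nat \<times> nat \<Rightarrow> nat \<times> nat \<times> nat" where
  "swap13 = (\<lambda>(i, j, k). (k, j, i))"

lemma axis_symmetry_flip1: "axis_symmetry flip1"
  unfolding axis_symmetry_def flip1_def
proof (intro conjI allI impI)
  show "(\<lambda>(i, j, k). (1 - i, j, k)) ` index_cube \<subseteq> index_cube"
    by (auto simp: idx2_def)
  fix a b c :: vec2 assume "nonneg2 a \<and> nonneg2 b \<and> nonneg2 c"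
  then show "\<exists>a' b' c'. nonneg2 a' \<and> nonneg2 b' \<and> nonneg2 c' \<and>
      tensor_eq (reindex (\<lambda>(i, j, k). (1 - i, j, k)) (outer3 a b c)) (outer3 a' b' c')"
    by (intro exI[of _ "\<lambda>i. a (1 - i)"] exI[of _ b] exI[of _ c])
       (simp add: nonneg2_def tensor_eq_iff reindex_def outer3_def)
qed

lemma axis_symmetry_swap12: "axis_symmetry swap12"
  unfolding axis_symmetry_def swap12_def
proof (intro conjI allI impI)
  show "(\<lambda>(i, j, k). (j, i, k)) ` index_cube \<subseteq> index_cube"
    by auto
  fix a b c :: vec2 assume "nonneg2 a \<and> nonneg2 b \<and> nonneg2 c"
  then show "\<exists>a' b' c'. nonneg2 a' \<and> nonneg2 b' \<and> nonneg2 c' \<and>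
      tensor_eq (reindex (\<lambda>(i, j, k). (j, i, k)) (outer3 a b c)) (outer3 a' b' c')"
    by (intro exI[of _ b] exI[of _ a] exI[of _ c])
       (simp add: tensor_eq_def reindex_def outer3_def)
qed

lemma axis_symmetry_swap13: "axis_symmetry swap13"
  unfolding axis_symmetry_def swap13_def
proof (intro conjI allI impI)
  show "(\<lambda>(i, j, k). (k, j, i)) ` index_cube \<subseteq> index_cube"
    by auto
  fix a b c :: vec2 assume "nonneg2 a \<and> nonneg2 b \<and> nonneg2 c"
  then show "\<exists>a' b' c'. nonneg2 a' \<and> nonneg2 b' \<and> nonneg2 c' \<and>
      tensor_eq (reindex (\<lambda>(i, j, k). (k, j, i)) (outer3 a b c)) (outer3 a' b' c')"
    by (intro exI[of _ c] exI[of _ b] exI[of _ a])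
       (simp add: tensor_eq_def reindex_def outer3_def)
qed

lemma nonneg_rank_le_reindex:
  assumes \<sigma>: "axis_symmetry \<sigma>" and q: "nonneg_rank_le n q"
  shows "nonneg_rank_le n (reindex \<sigma> q)"
proof -
  note cube = axis_symmetry_cube[OF \<sigma>]
  obtain a b c where abc: "\<forall>r<n. nonneg2 (a r) \<and> nonneg2 (b r) \<and> nonneg2 (c r)"
    and q_eq: "tensor_eq q (\<lambda>i j k. \<Sum>r<n. outer3 (a r) (b r) (c r) i j k)"
    using q unfolding nonneg_rank_le_def by blast
  have "\<forall>r<n. \<exists>a' b' c'. nonneg2 a' \<and> nonneg2 b' \<and> nonneg2 c' \<and>
      tensor_eq (reindex \<sigma> (outer3 (a r) (b r) (c r))) (outer3 a' b' c')"
    using axis_symmetry_outer3[OF \<sigma>] abc by blast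
  then obtain a' b' c' where abc': "\<forall>r<n. nonneg2 (a' r) \<and> nonneg2 (b' r) \<and> nonneg2 (c' r) \<and>
      tensor_eq (reindex \<sigma> (outer3 (a r) (b r) (c r))) (outer3 (a' r) (b' r) (c' r))"
    by (metis (no_types))
  have "tensor_eq (reindex \<sigma> q) (reindex \<sigma> (\<lambda>i j k. \<Sum>r<n. outer3 (a r) (b r) (c r) i j k))"
    using tensor_eq_reindex[OF cube q_eq] .
  also have "reindex \<sigma> (\<lambda>i j k. \<Sum>r<n. outer3 (a r) (b r) (c r) i j k) =
      (\<lambda>i j k. \<Sum>r<n. reindex \<sigma> (outer3 (a r) (b r) (c r)) i j k)"
    by (simp add: reindex_def fun_eq_iff split: prod.split)
  finally have "tensor_eq (reindex \<sigma> q)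
      (\<lambda>i j k. \<Sum>r<n. reindex \<sigma> (outer3 (a r) (b r) (c r)) i j k)" .
  moreover have "tensor_eq (\<lambda>i j k. \<Sum>r<n. reindex \<sigma> (outer3 (a r) (b r) (c r)) i j k)
      (\<lambda>i j k. \<Sum>r<n. outer3 (a' r) (b' r) (c' r) i j k)"
    using abc' by (intro tensor_eq_sum) blast
  ultimately have "tensor_eq (reindex \<sigma> q) (\<lambda>i j k. \<Sum>r<n. outer3 (a' r) (b' r) (c' r) i j k)"
    by (rule tensor_eq_trans)
  then show ?thesis
    using abc' unfolding nonneg_rank_le_def by blast
qed

definition positive_tensor :: "tensor3 \<Rightarrow> bool" where
  "positive_tensor q \<longleftrightarrow> (\<forall>i\<in>idx2. \<forall>j\<in>idx2. \<forall>k\<in>idx2. q i j k > 0)"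

lemma positive_tensor_iff:
  "positive_tensor q \<longleftrightarrow>
     q 0 0 0 > 0 \<and> q 0 0 1 > 0 \<and> q 0 1 0 > 0 \<and> q 0 1 1 > 0 \<and>
     q 1 0 0 > 0 \<and> q 1 0 1 > 0 \<and> q 1 1 0 > 0 \<and> q 1 1 1 > 0"
  by (simp add: positive_tensor_def idx2_def)

lemma positive_tensor_reindex:
  assumes "\<sigma> ` index_cube \<subseteq> index_cube" and "positive_tensor q"
  shows "positive_tensor (reindex \<sigma> q)"
  unfolding positive_tensor_def
proof (intro ballI)
  fix i j k assume "i \<in> idx2" "j \<in> idx2" "k \<in> idx2"
  then have "\<sigma> (i, j, k) \<in> index_cube"
    using assms(1) by blast
  then show "reindex \<sigma> q i j k > 0"
    using assms(2) by (auto simp: positive_tensor_def reindex_def split: prod.split)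
qed

definition vec_of :: "real \<Rightarrow> real \<Rightarrow> vec2" where
  "vec_of x y = (\<lambda>n. if n = 0 then x else y)"

lemma nonneg2_vec_of [simp]: "nonneg2 (vec_of x y) \<longleftrightarrow> x \<ge> 0 \<and> y \<ge> 0"
  by (simp add: nonneg2_def vec_of_def)

lemma vec_of_simps [simp]: "vec_of x y 0 = x" "vec_of x y (Suc 0) = y"
  by (simp_all add: vec_of_def)

lemma nonneg_rank_le_3_if_rank_one_slice:
  assumes q: "positive_tensor q" and det: "q 0 0 0 * q 0 1 1 = q 0 0 1 * q 0 1 0"
  shows "nonneg_rank_le 3 q"
proof -
  have pos: "q 0 0 0 > 0" "q 0 0 1 > 0" "q 0 1 0 > 0" "q 1 0 0 > 0" "q 1 0 1 > 0"
    "q 1 1 0 > 0" "q 1 1 1 > 0"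
    using q by (simp_all add: positive_tensor_iff)
  let ?slice0 =
    "outer3 (vec_of 1 0) (vec_of (q 0 0 0) (q 0 1 0)) (vec_of 1 (q 0 0 1 / q 0 0 0))"
  let ?row10 = "outer3 (vec_of 0 1) (vec_of 1 0) (vec_of (q 1 0 0) (q 1 0 1))"
  let ?row11 = "outer3 (vec_of 0 1) (vec_of 0 1) (vec_of (q 1 1 0) (q 1 1 1))"
  have "nonneg_rank_le (1 + (1 + 1))
      (\<lambda>i j k. ?slice0 i j k + (?row10 i j k + ?row11 i j k))"
    using pos by (intro nonneg_rank_le_add nonneg_rank_le_outer3) simp_all
  moreover have "tensor_eq q (\<lambda>i j k. ?slice0 i j k + (?row10 i j k + ?row11 i j k))"
    using pos det by (simp add: tensor_eq_iff outer3_def field_simps)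
  ultimately have "nonneg_rank_le (1 + (1 + 1)) q"
    by (rule nonneg_rank_le_cong[rotated])
  then show ?thesis
    by (simp add: numeral_3_eq_3)
qed

definition hadamard_nonneg_rank2 :: "tensor3 \<Rightarrow> bool" where
  "hadamard_nonneg_rank2 q \<longleftrightarrow> (\<exists>s t. nonneg_rank_le 2 s \<and> nonneg_rank_le 2 t \<and>
      tensor_eq q (\<lambda>i j k. s i j k * t i j k))"

lemma hadamard_nonneg_rank2_cong:
  "tensor_eq q q' \<Longrightarrow> hadamard_nonneg_rank2 q' \<Longrightarrow> hadamard_nonneg_rank2 q"
  unfolding hadamard_nonneg_rank2_def by (meson tensor_eq_trans)

lemma hadamard_nonneg_rank2_reindex:
  assumes \<sigma>: "axis_symmetry \<sigma>" and q: "hadamard_nonneg_rank2 q"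
  shows "hadamard_nonneg_rank2 (reindex \<sigma> q)"
proof -
  obtain s t where st: "nonneg_rank_le 2 s" "nonneg_rank_le 2 t"
    and q_eq: "tensor_eq q (\<lambda>i j k. s i j k * t i j k)"
    using q unfolding hadamard_nonneg_rank2_def by blast
  have "tensor_eq (reindex \<sigma> q) (reindex \<sigma> (\<lambda>i j k. s i j k * t i j k))"
    using tensor_eq_reindex[OF axis_symmetry_cube[OF \<sigma>] q_eq] .
  also have "reindex \<sigma> (\<lambda>i j k. s i j k * t i j k) =
      (\<lambda>i j k. reindex \<sigma> s i j k * reindex \<sigma> t i j k)"
    by (simp add: reindex_def fun_eq_iff split: prod.split)
  finally show ?thesis
    using nonneg_rank_le_reindex[OF \<sigma>] st unfolding hadamard_nonneg_rank2_def by blast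
qed

lemma hadamard_nonneg_rank2_if_rank_one_slice:
  assumes q: "positive_tensor q" and det: "q 0 0 0 * q 0 1 1 = q 0 0 1 * q 0 1 0"
  shows "hadamard_nonneg_rank2 q"
proof -
  have pos: "q 0 0 0 > 0" "q 0 0 1 > 0" "q 0 1 0 > 0" "q 1 0 0 > 0" "q 1 0 1 > 0"
    "q 1 1 0 > 0" "q 1 1 1 > 0"
    using q by (simp_all add: positive_tensor_iff)
  define L where "L = min (q 1 0 0 / q 1 1 0) (q 1 0 1 / q 1 1 1)"
  have L: "L > 0" "L \<le> q 1 0 0 / q 1 1 0" "L \<le> q 1 0 1 / q 1 1 1"
    using pos by (simp_all add: L_def)
  let ?s = "\<lambda>i j k. outer3 (vec_of 1 1) (vec_of 1 1) (vec_of 1 1) i j k +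
    outer3 (vec_of 0 1) (vec_of (1 / L) 0)
      (vec_of (q 1 0 0 / q 1 1 0 - L) (q 1 0 1 / q 1 1 1 - L)) i j k"
  let ?t = "\<lambda>i j k.
    outer3 (vec_of 1 0) (vec_of (q 0 0 0) (q 0 1 0)) (vec_of 1 (q 0 0 1 / q 0 0 0)) i j k +
    outer3 (vec_of 0 1) (vec_of L 1) (vec_of (q 1 1 0) (q 1 1 1)) i j k"
  have "nonneg_rank_le (1 + 1) ?s" "nonneg_rank_le (1 + 1) ?t"
    using pos L by (intro nonneg_rank_le_add nonneg_rank_le_outer3; simp)+
  moreover have "tensor_eq q (\<lambda>i j k. ?s i j k * ?t i j k)"
    using pos L(1) det by (simp add: tensor_eq_iff outer3_def field_simps)
  ultimately show ?thesis
    unfolding hadamard_nonneg_rank2_def one_add_one by blast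
qed

lemma M33I: "p \<in> simplex7 \<Longrightarrow> nonneg_rank_le 3 p \<Longrightarrow> p \<in> M33"
  unfolding M33_def nonneg_rank_le_def by blast

lemma RBM32I:
  assumes "p \<in> simplex7" and "hadamard_nonneg_rank2 p"
  shows "p \<in> RBM32"
proof -
  obtain s t where "nonneg_rank_le 2 s" "nonneg_rank_le 2 t"
    and p: "tensor_eq p (\<lambda>i j k. s i j k * t i j k)"
    using assms(2) unfolding hadamard_nonneg_rank2_def by blast
  then obtain a b c a' b' c' where
    nn: "\<forall>r<2::nat. nonneg2 (a r) \<and> nonneg2 (b r) \<and> nonneg2 (c r)"
      "\<forall>r<2::nat. nonneg2 (a' r) \<and> nonneg2 (b' r) \<and> nonneg2 (c' r)"
    and s: "tensor_eq s (\<lambda>i j k. \<Sum>r<2. outer3 (a r) (b r) (c r) i j k)"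
    and t: "tensor_eq t (\<lambda>i j k. \<Sum>r<2. outer3 (a' r) (b' r) (c' r) i j k)"
    unfolding nonneg_rank_le_def by blast
  have factors: "tensor_eq p (\<lambda>i j k.
      (outer3 (a 0) (b 0) (c 0) i j k + outer3 (a 1) (b 1) (c 1) i j k) *
      (outer3 (a' 0) (b' 0) (c' 0) i j k + outer3 (a' 1) (b' 1) (c' 1) i j k))"
    using p s t by (simp add: tensor_eq_def numeral_2_eq_2)
  have nonneg: "nonneg2 (a 0)" "nonneg2 (b 0)" "nonneg2 (c 0)"
    "nonneg2 (a 1)" "nonneg2 (b 1)" "nonneg2 (c 1)"
    "nonneg2 (a' 0)" "nonneg2 (b' 0)" "nonneg2 (c' 0)"
    "nonneg2 (a' 1)" "nonneg2 (b' 1)" "nonneg2 (c' 1)"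
    using nn by simp_all
  show ?thesis
    unfolding RBM32_def mem_Collect_eq
    by (rule conjI[OF assms(1)], rule exI[of _ "a 0"], rule exI[of _ "b 0"], rule exI[of _ "c 0"],
        rule exI[of _ "a 1"], rule exI[of _ "b 1"], rule exI[of _ "c 1"],
        rule exI[of _ "a' 0"], rule exI[of _ "b' 0"], rule exI[of _ "c' 0"],
        rule exI[of _ "a' 1"], rule exI[of _ "b' 1"], rule exI[of _ "c' 1"]) (intro conjI factors nonneg)
qed

lemma rank_one_slice_up_to_symmetry:
  assumes p: "positive_tensor p" and "\<exists>i\<in>{1,2,3}. \<exists>j\<in>{0,1}. slice_det p i j = 0"
  shows "\<exists>\<sigma> q. axis_symmetry \<sigma> \<and> positive_tensor q \<and>
    q 0 0 0 * q 0 1 1 = q 0 0 1 * q 0 1 0 \<and> tensor_eq p (reindex \<sigma> q)"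
proof -
  have witness: "\<exists>\<sigma> q. axis_symmetry \<sigma> \<and> positive_tensor q \<and>
      q 0 0 0 * q 0 1 1 = q 0 0 1 * q 0 1 0 \<and> tensor_eq p (reindex \<sigma> q)"
    if "axis_symmetry \<sigma>" "axis_symmetry \<tau>" "tensor_eq p (reindex \<sigma> (reindex \<tau> p))"
      "slice_det (reindex \<tau> p) 1 0 = 0" for \<sigma> \<tau>
    using that positive_tensor_reindex[OF axis_symmetry_cube[OF that(2)] p]
    by (intro exI[of _ \<sigma>] exI[of _ "reindex \<tau> p"]) (simp add: slice_det_def)
  from assms(2) consider "slice_det p 1 0 = 0" | "slice_det p 1 1 = 0" | "slice_det p 2 0 = 0"
    | "slice_det p 2 1 = 0" | "slice_det p 3 0 = 0" | "slice_det p 3 1 = 0"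
    by blast
  then show ?thesis
  proof cases
    case 1
    then show ?thesis
      by (intro witness[of id id] axis_symmetry_id)
         (simp_all add: tensor_eq_iff reindex_def slice_det_def)
  next
    case 2
    then show ?thesis
      by (intro witness[of flip1 flip1] axis_symmetry_flip1)
         (simp_all add: tensor_eq_iff reindex_def flip1_def slice_det_def)
  next
    case 3
    then show ?thesis
      by (intro witness[of swap12 swap12] axis_symmetry_swap12)
         (simp_all add: tensor_eq_iff reindex_def swap12_def slice_det_def)
  next
    case 4
    then show ?thesis
      by (intro witness[of "flip1 \<circ> swap12" "swap12 \<circ> flip1"] axis_symmetry_comp
          axis_symmetry_flip1 axis_symmetry_swap12)
         (simp_all add: tensor_eq_iff reindex_def flip1_def swap12_def slice_det_def)
  next
    case 5
    then show ?thesis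
      by (intro witness[of swap13 swap13] axis_symmetry_swap13)
         (simp_all add: tensor_eq_iff reindex_def swap13_def slice_det_def)
  next
    case 6
    then show ?thesis
      by (intro witness[of "flip1 \<circ> swap13" "swap13 \<circ> flip1"] axis_symmetry_comp
          axis_symmetry_flip1 axis_symmetry_swap13)
         (simp_all add: tensor_eq_iff reindex_def flip1_def swap13_def slice_det_def)
  qed
qed

theorem mainTheorem11:
  fixes p :: tensor3
  assumes "p \<in> simplex7"
    and "\<forall>i\<in>idx2. \<forall>j\<in>idx2. \<forall>k\<in>idx2. p i j k > 0"
    and "\<exists>i\<in>{1,2,3}. \<exists>j\<in>{0,1}. slice_det p i j = 0"
  shows "p \<in> RBM32 \<and> p \<in> M33"
proof -
  obtain \<sigma> q where \<sigma>: "axis_symmetry \<sigma>" and q: "positive_tensor q"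
    "q 0 0 0 * q 0 1 1 = q 0 0 1 * q 0 1 0" and p: "tensor_eq p (reindex \<sigma> q)"
    using rank_one_slice_up_to_symmetry assms(2,3) unfolding positive_tensor_def by blast
  have "hadamard_nonneg_rank2 p"
    using hadamard_nonneg_rank2_if_rank_one_slice[OF q]
    by (intro hadamard_nonneg_rank2_cong[OF p] hadamard_nonneg_rank2_reindex[OF \<sigma>])
  moreover have "nonneg_rank_le 3 p"
    using nonneg_rank_le_3_if_rank_one_slice[OF q]
    by (intro nonneg_rank_le_cong[OF p] nonneg_rank_le_reindex[OF \<sigma>])
  ultimately show ?thesis
    using assms(1) RBM32I M33I by blast
qed

end
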